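(* For $d\ge 4$ and $\ell\ge 3$, the subKautz digraph $sK(d,\ell)$ has diameter $2\ell-1$.
   Context: The subKautz digraph $sK(d,\ell)$ ($d,\ell\ge2$) has vertex set $\{x_1\ldots x_\ell\in\mathbb Z_{d+1}^\ell : x_i\neq x_{i+1},\ i=1,\ldots,\ell-1\}$ and arcs $x_1\ldots x_\ell\to x_2\ldots x_\ell x_{\ell+1}$ for every $x_{\ell+1}\in\mathbb Z_{d+1}$ with $x_{\ell+1}\neq x_1,x_\ell$. The diameter is the maximum directed distance between ordered pairs of vertices. *)

theory Defs
  imports Main "HOL-Library.Extended_Nat"
begin

definition sK_vertices :: "nat \<Rightarrow> nat \<Rightarrow> nat list set" where
  "sK_vertices d l = {xs. length xs = l \<and> (\<forall>i<l. xs ! i < d + 1)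
                        \<and> (\<forall>i. i + 1 < l \<longrightarrow> xs ! i \<noteq> xs ! (i + 1))}"

definition sK_arcs :: "nat \<Rightarrow> nat \<Rightarrow> (nat list \<times> nat list) set" where
  "sK_arcs d l = {(u, v). u \<in> sK_vertices d l \<and>
      (\<exists>y. y < d + 1 \<and> y \<noteq> hd u \<and> y \<noteq> last u \<and> v = tl u @ [y])}"

text \<open>Directed distance: length of a shortest directed walk (\<infinity> if none).\<close>
definition sK_dist :: "nat \<Rightarrow> nat \<Rightarrow> nat list \<Rightarrow> nat list \<Rightarrow> enat" where
  "sK_dist d l u v = (INF k \<in> {k. (u, v) \<in> (sK_arcs d l) ^^ k}. enat k)"

definition sK_diameter :: "nat \<Rightarrow> nat \<Rightarrow> enat" where
  "sK_diameter d l = (SUP p \<in> sK_vertices d l \<times> sK_vertices d l. sK_dist d l (fst p) (snd p))"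

end

theory Submission
  imports Defs
begin

text \<open>A walk of length k from u is the same as a word z_0 ... z_{l+k-1} extending u in which
  consecutive letters differ and z_i \<noteq> z_{i-l}; it ends in z_k ... z_{k+l-1}.

  Upper bound: if v_j \<noteq> u_{m+j} whenever both are defined, then u can be joined to v by
  inserting m \<ge> 1 filler letters between them. Each filler must avoid at most four letters
  (its predecessor, the letter l places earlier, the letter l places later and v_0),
  so with d + 1 \<ge> 5 letters the fillers can be chosen greedily. Taking m = l - 1 when
  v_0 \<noteq> u_{l-1} and m = l - 2 otherwise gives every distance at most 2l - 1.

  Lower bound: let u = ...0101010 (alternating, ending in 0) and v = 12010101.... A walk of
  length k < l would make v_0 ... v_{l-1-k} a suffix of u, impossible since u never uses 2
  and v_0 \<noteq> u_{l-1}. A walk of length l + m with m \<le> l - 2 forces v_j \<noteq> u_{m+j}, which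
  fails for j = 0 or j = 2 according to the parity of u_m.\<close>

lemma arcs_pow_if_extension:
  assumes u: "u \<in> sK_vertices d l" and "l \<ge> 1"
    and extends: "\<forall>i<l. z i = u!i"
    and range: "\<forall>i<l+k. z i < d+1"
    and adjacent: "\<forall>i. i+1 < l+k \<longrightarrow> z i \<noteq> z (Suc i)"
    and shifted: "\<forall>i. l \<le> i \<and> i < l+k \<longrightarrow> z i \<noteq> z (i-l)"
  shows "(u, map z [k..<k+l]) \<in> sK_arcs d l ^^ k"
  using range adjacent shifted
proof (induction k)
  case 0
  have "map z [0..<l] = u"
    using u extends by (intro nth_equalityI) (auto simp: sK_vertices_def)
  then show ?case by simp
next
  case (Suc k)
  let ?w = "map z [k..<k+l]"
  have walk: "(u, ?w) \<in> sK_arcs d l ^^ k"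
    using Suc by auto
  have "?w \<in> sK_vertices d l"
    using Suc.prems unfolding sK_vertices_def by (auto simp: add.commute)
  moreover have w: "?w = z k # map z [Suc k..<k+l]"
    using \<open>l \<ge> 1\<close> by (simp add: upt_conv_Cons)
  moreover have "last ?w = z (k+l-1)"
    using \<open>l \<ge> 1\<close> by (simp add: last_map)
  moreover have "z (k+l) < d+1" "z (k+l) \<noteq> z k" "z (k+l) \<noteq> z (k+l-1)"
    using Suc.prems(1) Suc.prems(3)[rule_format, of "k+l"] Suc.prems(2)[rule_format, of "k+l-1"]
      \<open>l \<ge> 1\<close> by auto
  moreover have "map z [Suc k..<Suc k+l] = tl ?w @ [z (k+l)]"
    using w \<open>l \<ge> 1\<close> by simp
  ultimately have "(?w, map z [Suc k..<Suc k+l]) \<in> sK_arcs d l"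
    unfolding sK_arcs_def by auto
  with walk show ?case by auto
qed

lemma extension_if_arcs_pow:
  assumes "(u, v) \<in> sK_arcs d l ^^ k" and u: "u \<in> sK_vertices d l" and "l \<ge> 1"
  obtains z where "\<forall>i<l. z i = u!i" and "v = map z [k..<k+l]"
    and "\<forall>i. l \<le> i \<and> i < l+k \<longrightarrow> z i \<noteq> z (i-l)"
proof -
  have "\<exists>z. (\<forall>i<l. z i = u!i) \<and> v = map z [k..<k+l] \<and> (\<forall>i. l \<le> i \<and> i < l+k \<longrightarrow> z i \<noteq> z (i-l))"
    using assms(1)
  proof (induction k arbitrary: v)
    case 0
    moreover have "map (\<lambda>i. u!i) [0..<l] = u"
      using u by (intro nth_equalityI) (auto simp: sK_vertices_def)
    ultimately show ?case by auto
  next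
    case (Suc k)
    then obtain w where "(u, w) \<in> sK_arcs d l ^^ k" and wv: "(w, v) \<in> sK_arcs d l" by auto
    with Suc.IH obtain z where extends: "\<forall>i<l. z i = u!i" and w: "w = map z [k..<k+l]"
      and shifted: "\<forall>i. l \<le> i \<and> i < l+k \<longrightarrow> z i \<noteq> z (i-l)" by blast
    from wv obtain y where y: "y \<noteq> hd w" "v = tl w @ [y]" unfolding sK_arcs_def by auto
    define z' where "z' = z(k+l := y)"
    have w_cons: "w = z k # map z [Suc k..<k+l]"
      using \<open>l \<ge> 1\<close> w by (simp add: upt_conv_Cons)
    have "map z' [Suc k..<k+l] = map z [Suc k..<k+l]"
      unfolding z'_def by (intro map_cong) auto
    then have "v = map z' [Suc k..<Suc k+l]"
      using y w_cons \<open>l \<ge> 1\<close> by (simp add: z'_def)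
    moreover have "\<forall>i<l. z' i = u!i"
      using extends by (auto simp: z'_def)
    moreover have "z' i \<noteq> z' (i-l)" if "l \<le> i" "i < l + Suc k" for i
    proof (cases "i = k+l")
      case True
      then show ?thesis using y(1) w_cons \<open>l \<ge> 1\<close> by (simp add: z'_def)
    next
      case False
      moreover have "i - l \<noteq> k + l" using that \<open>l \<ge> 1\<close> by arith
      ultimately show ?thesis using shifted that by (simp add: z'_def)
    qed
    ultimately show ?case by blast
  qed
  then show ?thesis using that by blast
qed

lemma arcs_pow_short_overlap:
  assumes "(u, v) \<in> sK_arcs d l ^^ k" and "u \<in> sK_vertices d l" and "k + j < l"
  shows "v!j = u!(k+j)"
proof -
  obtain z where "\<forall>i<l. z i = u!i" and "v = map z [k..<k+l]"
    using extension_if_arcs_pow[OF assms(1,2)] assms(3) by auto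
  then show ?thesis using assms(3) by simp
qed

lemma arcs_pow_long_no_overlap:
  assumes "(u, v) \<in> sK_arcs d l ^^ (l+m)" and "u \<in> sK_vertices d l" and "m + j < l"
  shows "v!j \<noteq> u!(m+j)"
proof -
  obtain z where "\<forall>i<l. z i = u!i" and "v = map z [l+m..<l+m+l]"
    and "\<forall>i. l \<le> i \<and> i < l+(l+m) \<longrightarrow> z i \<noteq> z (i-l)"
    using extension_if_arcs_pow[OF assms(1,2)] assms(3) by auto
  then show ?thesis using assms(3)
    by (auto simp: add.assoc dest: spec[of _ "l+m+j"])
qed

lemma Least_not_in_le_card:
  fixes S :: "nat set"
  assumes "finite S"
  shows "(LEAST c. c \<notin> S) \<notin> S" and "(LEAST c. c \<notin> S) \<le> card S"
proof -
  have "card {0..card S} > card S" by simp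
  then have "\<not> {0..card S} \<subseteq> S"
    using card_mono[OF assms] by (meson not_le)
  then obtain c where "c \<le> card S" "c \<notin> S" by (auto simp: subset_iff)
  then show "(LEAST c. c \<notin> S) \<notin> S" "(LEAST c. c \<notin> S) \<le> card S"
    using LeastI[of "\<lambda>c. c \<notin> S" c] Least_le[of "\<lambda>c. c \<notin> S" c] by auto
qed

fun greedy_seq :: "(nat \<Rightarrow> nat set) \<Rightarrow> nat \<Rightarrow> nat \<Rightarrow> nat" where
  "greedy_seq F e 0 = (LEAST c. c \<notin> insert e (F 0))"
| "greedy_seq F e (Suc j) = (LEAST c. c \<notin> insert (greedy_seq F e j) (F (Suc j)))"

lemma greedy_seq_avoids:
  assumes "\<And>j. finite (F j)" and "\<And>j. card (F j) \<le> n"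
  shows "greedy_seq F e j \<le> Suc n" and "greedy_seq F e j \<notin> F j"
    and "greedy_seq F e 0 \<noteq> e" and "greedy_seq F e (Suc j) \<noteq> greedy_seq F e j"
proof -
  have least: "(LEAST c. c \<notin> insert x (F i)) \<notin> insert x (F i)"
    "(LEAST c. c \<notin> insert x (F i)) \<le> Suc n" for x i
  proof -
    have "card (insert x (F i)) \<le> Suc n"
      using assms(2)[of i] by (simp add: card_insert_if assms(1))
    then show "(LEAST c. c \<notin> insert x (F i)) \<notin> insert x (F i)"
      "(LEAST c. c \<notin> insert x (F i)) \<le> Suc n"
      using Least_not_in_le_card[of "insert x (F i)"] assms(1) by auto
  qed
  show "greedy_seq F e j \<le> Suc n" "greedy_seq F e j \<notin> F j"
    using least by (cases j; simp)+
  show "greedy_seq F e 0 \<noteq> e" "greedy_seq F e (Suc j) \<noteq> greedy_seq F e j"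
    using least(1) by auto
qed

definition join_word :: "nat \<Rightarrow> nat \<Rightarrow> nat list \<Rightarrow> (nat \<Rightarrow> nat) \<Rightarrow> nat list \<Rightarrow> nat \<Rightarrow> nat" where
  "join_word l m u w v i = (if i < l then u!i else if i < l+m then w (i-l) else v!(i-l-m))"

lemma join_word_adjacent:
  assumes "u \<in> sK_vertices d l" and "v \<in> sK_vertices d l" and "1 \<le> m"
    and w_start: "w 0 \<noteq> u!(l-1)" and w_step: "\<And>j. w (Suc j) \<noteq> w j" and w_end: "\<And>j. w j \<noteq> v!0"
    and "i+1 < l+m+l"
  shows "join_word l m u w v i \<noteq> join_word l m u w v (Suc i)"
proof -
  have u_adj: "\<forall>i. i+1<l \<longrightarrow> u!i \<noteq> u!(i+1)" and v_adj: "\<forall>i. i+1<l \<longrightarrow> v!i \<noteq> v!(i+1)"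
    using assms(1,2) by (auto simp: sK_vertices_def)
  consider "Suc i < l" | "Suc i = l" | "l \<le> i" "Suc i < l+m" | "Suc i = l+m" | "l+m \<le> i"
    by linarith
  then show ?thesis
  proof cases
    case 1
    then show ?thesis using u_adj by (simp add: join_word_def)
  next
    case 2
    then have "i = l - 1" by simp
    with 2 show ?thesis using w_start \<open>1 \<le> m\<close> by (simp add: join_word_def)
  next
    case 3
    then have "Suc i - l = Suc (i - l)" by arith
    with 3 show ?thesis using w_step[of "i-l"] by (simp add: join_word_def)
  next
    case 4
    then have "i - l = m - 1" by arith
    with 4 show ?thesis using w_end[of "m-1"] \<open>1 \<le> m\<close> by (simp add: join_word_def)
  next
    case 5
    then have "Suc i - l - m = Suc (i - l - m)" by arith
    with 5 \<open>i+1 < l+m+l\<close> show ?thesis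
      using v_adj[rule_format, of "i-l-m"] by (simp add: join_word_def)
  qed
qed

lemma join_word_shifted:
  assumes "m < l" and no_overlap: "\<forall>j. j < l - m \<longrightarrow> v!j \<noteq> u!(m+j)"
    and w_u: "\<And>j. w j \<noteq> u!j" and w_v: "\<And>j. w j \<noteq> v!(j + (l-m))"
    and "l \<le> i" and "i < l+m+l"
  shows "join_word l m u w v i \<noteq> join_word l m u w v (i-l)"
proof (cases "i < l+m")
  case True
  then show ?thesis using \<open>l \<le> i\<close> w_u[of "i-l"] \<open>m < l\<close> by (simp add: join_word_def)
next
  case False
  define j where "j = i - l - m"
  have ij: "i = l+m+j" "j < l" using assms(5,6) False by (auto simp: j_def)
  show ?thesis
  proof (cases "m + j < l")
    case True
    then show ?thesis using ij no_overlap by (simp add: join_word_def)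
  next
    case False
    then have "m + j - l + (l - m) = j" using \<open>m < l\<close> by arith
    with False show ?thesis using ij w_v[of "m+j-l"] \<open>m < l\<close> by (simp add: join_word_def)
  qed
qed

lemma arcs_pow_through_fillers:
  assumes u: "u \<in> sK_vertices d l" and v: "v \<in> sK_vertices d l" and "1 \<le> m" "m < l"
    and no_overlap: "\<forall>j. j < l - m \<longrightarrow> v!j \<noteq> u!(m+j)"
    and w_range: "\<And>j. w j < d+1"
    and w_start: "w 0 \<noteq> u!(l-1)" and w_step: "\<And>j. w (Suc j) \<noteq> w j" and w_end: "\<And>j. w j \<noteq> v!0"
    and w_u: "\<And>j. w j \<noteq> u!j" and w_v: "\<And>j. w j \<noteq> v!(j + (l-m))"
  shows "(u, v) \<in> sK_arcs d l ^^ (m+l)"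
proof -
  let ?z = "join_word l m u w v"
  have "(u, map ?z [m+l..<m+l+l]) \<in> sK_arcs d l ^^ (m+l)"
  proof (rule arcs_pow_if_extension[OF u])
    show "\<forall>i<l+(m+l). ?z i < d+1"
      using u v w_range by (auto simp: join_word_def sK_vertices_def)
    show "\<forall>i. i+1 < l+(m+l) \<longrightarrow> ?z i \<noteq> ?z (Suc i)"
      using join_word_adjacent[OF u v \<open>1 \<le> m\<close> w_start w_step w_end] by (simp add: add.assoc)
    show "\<forall>i. l \<le> i \<and> i < l+(m+l) \<longrightarrow> ?z i \<noteq> ?z (i-l)"
      using join_word_shifted[OF \<open>m < l\<close> no_overlap w_u w_v] by (simp add: add.assoc)
  qed (use \<open>m < l\<close> in \<open>auto simp: join_word_def\<close>)
  moreover have "map ?z [m+l..<m+l+l] = v"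
    using v by (intro nth_equalityI) (auto simp: join_word_def sK_vertices_def)
  ultimately show ?thesis by simp
qed

lemma arcs_pow_if_no_overlap:
  assumes "d \<ge> 4" and u: "u \<in> sK_vertices d l" and v: "v \<in> sK_vertices d l"
    and "1 \<le> m" "m < l" and no_overlap: "\<forall>j. j < l - m \<longrightarrow> v!j \<noteq> u!(m+j)"
  shows "(u, v) \<in> sK_arcs d l ^^ (m+l)"
proof -
  define F where "F j = {u!j, v!(j + (l-m)), v!0}" for j
  have "finite (F j)" "card (F j) \<le> 3" for j
    unfolding F_def by (auto simp: card_insert_if)
  note greedy = greedy_seq_avoids[of F, OF this]
  show ?thesis
  proof (rule arcs_pow_through_fillers[OF u v \<open>1 \<le> m\<close> \<open>m < l\<close> no_overlap])
    show "greedy_seq F (u!(l-1)) j < d+1" for j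
      using greedy(1)[of "u!(l-1)" j] \<open>d \<ge> 4\<close> by simp
    show "greedy_seq F (u!(l-1)) j \<noteq> u!j" "greedy_seq F (u!(l-1)) j \<noteq> v!(j + (l-m))"
      "greedy_seq F (u!(l-1)) j \<noteq> v!0" for j
      using greedy(2)[of "u!(l-1)" j] by (auto simp: F_def)
  qed (use greedy(3,4) in \<open>simp_all del: greedy_seq.simps\<close>)
qed

lemma map_upt_in_sK_vertices:
  assumes "\<And>i. i < l \<Longrightarrow> f i < d+1" and "\<And>i. i+1 < l \<Longrightarrow> f i \<noteq> f (i+1)"
  shows "map f [0..<l] \<in> sK_vertices d l"
  using assms by (simp add: sK_vertices_def)

definition diam_source :: "nat \<Rightarrow> nat list" where
  "diam_source l = map (\<lambda>i. (l-1-i) mod 2) [0..<l]"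

definition diam_target :: "nat \<Rightarrow> nat list" where
  "diam_target l = map (\<lambda>j. if j = 0 then 1 else if j = 1 then 2 else j mod 2) [0..<l]"

lemma diam_source_in_sK_vertices:
  assumes "d \<ge> 1" shows "diam_source l \<in> sK_vertices d l"
  unfolding diam_source_def
proof (rule map_upt_in_sK_vertices)
  show "(l-1-i) mod 2 < d+1" for i
    using \<open>d \<ge> 1\<close> mod_less_divisor[of 2 "l-1-i"] by linarith
  show "(l-1-i) mod 2 \<noteq> (l-1-(i+1)) mod 2" if "i+1 < l" for i
  proof -
    have "l-1-i = Suc (l-1-(i+1))" using that by arith
    then show ?thesis by (simp add: mod_Suc)
  qed
qed

lemma diam_target_in_sK_vertices:
  assumes "d \<ge> 2" shows "diam_target l \<in> sK_vertices d l"
  unfolding diam_target_def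
proof (rule map_upt_in_sK_vertices)
  show "(if i = 0 then 1 else if i = 1 then 2 else i mod 2) < d+1" for i :: nat
    using \<open>d \<ge> 2\<close> mod_less_divisor[of 2 i] by auto
  show "(if i = 0 then 1 else if i = 1 then 2 else i mod 2) \<noteq>
    (if i+1 = 0 then 1 else if i+1 = 1 then 2 else (i+1) mod (2::nat))" for i :: nat
    by (cases "i = 0"; cases "i = 1"; simp add: mod_Suc)
qed

lemma diam_pair_no_short_walk:
  assumes "d \<ge> 1" and "l \<ge> 3" and "k \<le> 2*l - 2"
  shows "(diam_source l, diam_target l) \<notin> sK_arcs d l ^^ k"
proof
  assume walk: "(diam_source l, diam_target l) \<in> sK_arcs d l ^^ k"
  note u = diam_source_in_sK_vertices[OF \<open>d \<ge> 1\<close>]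
  have source: "i < l \<Longrightarrow> diam_source l ! i = (l-1-i) mod 2" for i
    by (simp add: diam_source_def)
  have target: "diam_target l ! 0 = 1" "diam_target l ! 1 = 2" "diam_target l ! 2 = 0"
    using \<open>l \<ge> 3\<close> by (simp_all add: diam_target_def)
  consider "k + 1 < l" | "k + 1 = l" | "l \<le> k" by linarith
  then show False
  proof cases
    case 1
    then have "diam_target l ! 1 = (l-1-(k+1)) mod 2"
      using arcs_pow_short_overlap[OF walk u, of 1] source by simp
    with target show False by simp
  next
    case 2
    then show False
      using arcs_pow_short_overlap[OF walk u, of 0] source target by simp
  next
    case 3
    define m where "m = k - l"
    have walk': "(diam_source l, diam_target l) \<in> sK_arcs d l ^^ (l+m)" and "m + 2 \<le> l"
      using walk 3 \<open>k \<le> 2*l - 2\<close> \<open>l \<ge> 3\<close> by (simp_all add: m_def)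
    show False
    proof (cases "even (l-1-m)")
      case True
      then obtain t where t: "l-1-m = 2*t" by (rule evenE)
      with \<open>m + 2 \<le> l\<close> have "m + 2 < l" "l-1-(m+2) = 2*(t-1)" by arith+
      then have "m + 2 < l" "(l-1-(m+2)) mod 2 = 0" by simp_all
      then show False
        using arcs_pow_long_no_overlap[OF walk' u, of 2] source target by simp
    next
      case False
      then have "(l-1-m) mod 2 = 1"
        by (simp only: odd_iff_mod_2_eq_one)
      then have "diam_source l ! m = 1"
        using source[of m] \<open>m + 2 \<le> l\<close> by simp
      then show False
        using arcs_pow_long_no_overlap[OF walk' u, of 0] \<open>m + 2 \<le> l\<close> target by simp
    qed
  qed
qed

lemma sK_dist_le_if_walk: "(u, v) \<in> sK_arcs d l ^^ k \<Longrightarrow> sK_dist d l u v \<le> enat k"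
  unfolding sK_dist_def by (rule INF_lower) simp

lemma sK_dist_ge_if_no_short_walk:
  "(\<And>k. k < n \<Longrightarrow> (u, v) \<notin> sK_arcs d l ^^ k) \<Longrightarrow> enat n \<le> sK_dist d l u v"
  unfolding sK_dist_def by (rule INF_greatest) (auto simp flip: not_less)

lemma sK_dist_le_2l_minus_1:
  assumes "d \<ge> 4" and "l \<ge> 3" and u: "u \<in> sK_vertices d l" and v: "v \<in> sK_vertices d l"
  shows "sK_dist d l u v \<le> enat (2*l - 1)"
proof (cases "v!0 = u!(l-1)")
  case False
  then have "(u, v) \<in> sK_arcs d l ^^ ((l-1) + l)"
    using assms by (intro arcs_pow_if_no_overlap) auto
  moreover have "(l-1) + l = 2*l - 1"
    using \<open>l \<ge> 3\<close> by simp
  ultimately show ?thesis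
    using sK_dist_le_if_walk by metis
next
  case True
  have "u!(l-2) \<noteq> u!(l-2+1)" "v!0 \<noteq> v!1"
    using u v \<open>l \<ge> 3\<close> unfolding sK_vertices_def by auto
  moreover have "l-2+1 = l-1"
    using \<open>l \<ge> 3\<close> by simp
  ultimately have "\<forall>j. j < l - (l-2) \<longrightarrow> v!j \<noteq> u!((l-2)+j)"
    using True \<open>l \<ge> 3\<close> by (auto simp: less_Suc_eq numeral_2_eq_2)
  then have "(u, v) \<in> sK_arcs d l ^^ ((l-2) + l)"
    using assms by (intro arcs_pow_if_no_overlap) auto
  then have "sK_dist d l u v \<le> enat ((l-2) + l)"
    by (rule sK_dist_le_if_walk)
  then show ?thesis
    using \<open>l \<ge> 3\<close> by (simp add: order_trans)
qed

theorem corollary0: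
  fixes d l :: nat
  assumes "d \<ge> 4" and "l \<ge> 3"
  shows "sK_diameter d l = enat (2 * l - 1)"
proof (rule antisym)
  show "sK_diameter d l \<le> enat (2 * l - 1)"
    unfolding sK_diameter_def using sK_dist_le_2l_minus_1[OF assms] by (auto intro: SUP_least)
next
  have "d \<ge> 2" using assms by simp
  have "enat (2 * l - 1) \<le> sK_dist d l (diam_source l) (diam_target l)"
    using diam_pair_no_short_walk[of d l] assms by (intro sK_dist_ge_if_no_short_walk) auto
  also have "\<dots> \<le> sK_diameter d l"
    unfolding sK_diameter_def using diam_source_in_sK_vertices diam_target_in_sK_vertices \<open>d \<ge> 2\<close>
    by (intro SUP_upper2[of "(diam_source l, diam_target l)"]) auto
  finally show "enat (2 * l - 1) \<le> sK_diameter d l" .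
qed

end
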